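(* Let $d = 2$ and $n \ge 1$. Every generalized epistemic state $(V,\vec v)$ on $n$ elementary systems has a corresponding toy stabilizer state, and every toy stabilizer state $\mathcal{S}$ on $n$ elementary systems has a corresponding generalized epistemic state. Furthermore, if the observables $\vec f, \vec g \in \mathbb{Z}_2^{2n}$ correspond to the toy Pauli operators $g', g''$ respectively, then $\vec f + \vec g$ corresponds to $g' g''$.
   Context: Generalized formalism ($d=2$): phase space $\Omega = \mathbb{Z}_2^{2n}$ with coordinates $\vec m = (q_1,p_1,\dots,q_n,p_n)^T$. An observable (quadrature variable) is a vector $\vec f \in \Omega$, evaluated on $\vec m$ as $\vec f^T \vec m \bmod 2$. The symplectic form is $\langle \vec f, \vec g\rangle = \sum_{i=1}^n (f_{2i-1} g_{2i} - f_{2i} g_{2i-1}) \bmod 2$; $\vec f,\vec g$ commute if $\langle \vec f,\vec g\rangle = 0$. A subspace $V\subseteq\Omega$ is isotropic if all its elements pairwise commute. A generalized epistemic state is a pair $(V,\vec v)$ with $V$ isotropic and $\vec v\in\Omega$ (valuation vector). Toy stabilizer formalism: let $\mathcal{X} = \mathrm{diag}(1,-1,1,-1)$, $\mathcal{Y} = \mathrm{diag}(1,-1,-1,1)$, $\mathcal{Z} = \mathrm{diag}(1,1,-1,-1)$ (so $\mathcal Y = \mathcal Z\mathcal X$), and the toy Pauli group $G_n = \{\alpha\, p_1\otimes\cdots\otimes p_n : p_i \in \{\mathbb{1}_4,\mathcal X,\mathcal Y,\mathcal Z\}, \alpha\in\{\pm1\}\}$, generated by $-\mathbb 1$ and $\mathcal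 X_k,\mathcal Z_k$ (acting as $\mathcal X,\mathcal Z$ on the $k$-th factor). Let $m: G_n \to P_n$ be the group homomorphism into the $n$-qubit Pauli group with $m(\mathcal X_k) = X_k$, $m(\mathcal Z_k) = Z_k$, $m(-\mathbb 1) = -\mathbb 1$; two elements $g,h\in G_n$ "commute" if $m(g)$ and $m(h)$ commute. A toy stabilizer state is a subgroup $\mathcal S\le G_n$ whose elements pairwise "commute" and which does not contain $-\mathbb 1$. Correspondence: an observable $\vec f$ corresponds to a toy Pauli operator $g = \alpha p_1\otimes\cdots\otimes p_n$ (with any $\alpha\in\{\pm 1\}$) if for each $j$: $(f_{2j-1},f_{2j}) = (0,0) \iff p_j = \mathbb 1$, $(0,1)\iff p_j = \mathcal Z$, $(1,0)\iff p_j=\mathcal X$, $(1,1)\iff p_j = \mathcal Y$. A stabilizer state $\mathcal S$ corresponds to a generalized state $(V,\vec v)$ (and vice versa) iff for each $\vec f\in V$ there is a corresponding $g = \alpha p_1\otimes\cdots\otimes p_n \in \mathcal S$ with $\alpha = (-1)^{\vec f^T \vec v}$. *)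

theory Defs
  imports Complex_Main "HOL-Library.Z2"
begin

(* A phase-space vector in Z_2^{2n} is a function nat => bit vanishing outside {0..<2n}.
   0-based coordinates: q_{j+1} = m (2*j), p_{j+1} = m (2*j+1), for j < n. *)

definition phase_space :: "nat \<Rightarrow> (nat \<Rightarrow> bit) set" where
  "phase_space n = {m. \<forall>i\<ge>2*n. m i = 0}"

definition vadd :: "(nat \<Rightarrow> bit) \<Rightarrow> (nat \<Rightarrow> bit) \<Rightarrow> nat \<Rightarrow> bit" where
  "vadd f g = (\<lambda>i. f i + g i)"

definition evalv :: "nat \<Rightarrow> (nat \<Rightarrow> bit) \<Rightarrow> (nat \<Rightarrow> bit) \<Rightarrow> bit" where
  "evalv n f m = (\<Sum>i<2*n. f i * m i)"

definition symp :: "nat \<Rightarrow> (nat \<Rightarrow> bit) \<Rightarrow> (nat \<Rightarrow> bit) \<Rightarrow> bit" where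
  "symp n f g = (\<Sum>j<n. f (2*j) * g (2*j+1) - f (2*j+1) * g (2*j))"

definition subspace2 :: "nat \<Rightarrow> (nat \<Rightarrow> bit) set \<Rightarrow> bool" where
  "subspace2 n V \<longleftrightarrow> V \<subseteq> phase_space n \<and> (\<lambda>_. 0) \<in> V \<and>
     (\<forall>f\<in>V. \<forall>g\<in>V. vadd f g \<in> V) \<and> (\<forall>c::bit. \<forall>f\<in>V. (\<lambda>i. c * f i) \<in> V)"

definition isotropic :: "nat \<Rightarrow> (nat \<Rightarrow> bit) set \<Rightarrow> bool" where
  "isotropic n V \<longleftrightarrow> subspace2 n V \<and> (\<forall>f\<in>V. \<forall>g\<in>V. symp n f g = 0)"

definition gen_state :: "nat \<Rightarrow> (nat \<Rightarrow> bit) set \<Rightarrow> (nat \<Rightarrow> bit) \<Rightarrow> bool" where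
  "gen_state n V v \<longleftrightarrow> isotropic n V \<and> v \<in> phase_space n"

datatype pl = PI | PX | PY | PZ

(* diagonal entries (index 0..3) of the 4x4 toy matrices 1, X, Y, Z *)
fun tsite :: "pl \<Rightarrow> nat \<Rightarrow> int" where
  "tsite PI k = 1"
| "tsite PX k = (if k = 0 \<or> k = 2 then 1 else -1)"
| "tsite PY k = (if k = 0 \<or> k = 3 then 1 else -1)"
| "tsite PZ k = (if k = 0 \<or> k = 1 then 1 else -1)"

(* multi-indices of the 4^n-dimensional tensor product space *)
definition tidx :: "nat \<Rightarrow> (nat \<Rightarrow> nat) set" where
  "tidx n = {k. (\<forall>i<n. k i < 4) \<and> (\<forall>i\<ge>n. k i = 0)}"

(* the diagonal matrix  alpha p_1 (x) ... (x) p_n, given by its diagonal entries *)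
definition toy_op :: "nat \<Rightarrow> int \<Rightarrow> (nat \<Rightarrow> pl) \<Rightarrow> (nat \<Rightarrow> nat) \<Rightarrow> int" where
  "toy_op n \<alpha> p = (\<lambda>k. if k \<in> tidx n then \<alpha> * (\<Prod>i<n. tsite (p i) (k i)) else 0)"

definition toy_group :: "nat \<Rightarrow> ((nat \<Rightarrow> nat) \<Rightarrow> int) set" where
  "toy_group n = {toy_op n \<alpha> p | \<alpha> p. \<alpha> \<in> {1, -1}}"

(* matrix product of diagonal matrices *)
definition tmul :: "((nat \<Rightarrow> nat) \<Rightarrow> int) \<Rightarrow> ((nat \<Rightarrow> nat) \<Rightarrow> int) \<Rightarrow> (nat \<Rightarrow> nat) \<Rightarrow> int" where
  "tmul g h = (\<lambda>k. g k * h k)"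

definition toy_one :: "nat \<Rightarrow> (nat \<Rightarrow> nat) \<Rightarrow> int" where
  "toy_one n = toy_op n 1 (\<lambda>_. PI)"

definition toy_minus_one :: "nat \<Rightarrow> (nat \<Rightarrow> nat) \<Rightarrow> int" where
  "toy_minus_one n = toy_op n (-1) (\<lambda>_. PI)"

(* single qubit matrices 1, X, Z and  Z X  = m(Y) ; rows/cols indexed by bool (False = 0) *)
fun qsite :: "pl \<Rightarrow> bool \<Rightarrow> bool \<Rightarrow> complex" where
  "qsite PI a b = (if a = b then 1 else 0)"
| "qsite PX a b = (if a \<noteq> b then 1 else 0)"
| "qsite PZ a b = (if a = b then (if a then -1 else 1) else 0)"
| "qsite PY a b = (if a \<noteq> b then (if a then -1 else 1) else 0)"

definition bits :: "nat \<Rightarrow> (nat \<Rightarrow> bool) set" where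
  "bits n = {x. \<forall>i\<ge>n. \<not> x i}"

definition qubit_op :: "nat \<Rightarrow> int \<Rightarrow> (nat \<Rightarrow> pl) \<Rightarrow> (nat \<Rightarrow> bool) \<Rightarrow> (nat \<Rightarrow> bool) \<Rightarrow> complex" where
  "qubit_op n \<alpha> p x y = of_int \<alpha> * (\<Prod>i<n. qsite (p i) (x i) (y i))"

definition qmul :: "nat \<Rightarrow> ((nat \<Rightarrow> bool) \<Rightarrow> (nat \<Rightarrow> bool) \<Rightarrow> complex)
    \<Rightarrow> ((nat \<Rightarrow> bool) \<Rightarrow> (nat \<Rightarrow> bool) \<Rightarrow> complex) \<Rightarrow> (nat \<Rightarrow> bool) \<Rightarrow> (nat \<Rightarrow> bool) \<Rightarrow> complex" where
  "qmul n A B x y = (\<Sum>z\<in>bits n. A x z * B z y)"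

definition qcommute :: "nat \<Rightarrow> ((nat \<Rightarrow> bool) \<Rightarrow> (nat \<Rightarrow> bool) \<Rightarrow> complex)
    \<Rightarrow> ((nat \<Rightarrow> bool) \<Rightarrow> (nat \<Rightarrow> bool) \<Rightarrow> complex) \<Rightarrow> bool" where
  "qcommute n A B \<longleftrightarrow> (\<forall>x\<in>bits n. \<forall>y\<in>bits n. qmul n A B x y = qmul n B A x y)"

(* the map m : G_n -> P_n,  m(alpha p_1 (x) ... (x) p_n) = alpha m(p_1) (x) ... (x) m(p_n),
   with m(X)=X, m(Z)=Z, m(Y)=m(Z X)=Z X, m(-1) = -1. *)
definition toy_m :: "nat \<Rightarrow> ((nat \<Rightarrow> nat) \<Rightarrow> int) \<Rightarrow> (nat \<Rightarrow> bool) \<Rightarrow> (nat \<Rightarrow> bool) \<Rightarrow> complex" where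
  "toy_m n g = (SOME Q. \<exists>\<alpha> p. \<alpha> \<in> {1, -1} \<and> g = toy_op n \<alpha> p \<and> Q = qubit_op n \<alpha> p)"

definition toy_commute :: "nat \<Rightarrow> ((nat \<Rightarrow> nat) \<Rightarrow> int) \<Rightarrow> ((nat \<Rightarrow> nat) \<Rightarrow> int) \<Rightarrow> bool" where
  "toy_commute n g h \<longleftrightarrow> qcommute n (toy_m n g) (toy_m n h)"

definition toy_subgroup :: "nat \<Rightarrow> ((nat \<Rightarrow> nat) \<Rightarrow> int) set \<Rightarrow> bool" where
  "toy_subgroup n S \<longleftrightarrow> S \<subseteq> toy_group n \<and> toy_one n \<in> S \<and>
     (\<forall>g\<in>S. \<forall>h\<in>S. tmul g h \<in> S) \<and> (\<forall>g\<in>S. \<exists>h\<in>S. tmul g h = toy_one n)"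

definition toy_stab :: "nat \<Rightarrow> ((nat \<Rightarrow> nat) \<Rightarrow> int) set \<Rightarrow> bool" where
  "toy_stab n S \<longleftrightarrow> toy_subgroup n S \<and> (\<forall>g\<in>S. \<forall>h\<in>S. toy_commute n g h) \<and> toy_minus_one n \<notin> S"

fun lab :: "bit \<Rightarrow> bit \<Rightarrow> pl" where
  "lab a b = (if a = 0 then (if b = 0 then PI else PZ) else (if b = 0 then PX else PY))"

definition labels_match :: "nat \<Rightarrow> (nat \<Rightarrow> bit) \<Rightarrow> (nat \<Rightarrow> pl) \<Rightarrow> bool" where
  "labels_match n f p \<longleftrightarrow> (\<forall>j<n. p j = lab (f (2*j)) (f (2*j+1)))"

definition corr_obs :: "nat \<Rightarrow> (nat \<Rightarrow> bit) \<Rightarrow> ((nat \<Rightarrow> nat) \<Rightarrow> int) \<Rightarrow> bool" where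
  "corr_obs n f g \<longleftrightarrow> (\<exists>\<alpha> p. \<alpha> \<in> {1, -1} \<and> g = toy_op n \<alpha> p \<and> labels_match n f p)"

definition sgn_bit :: "bit \<Rightarrow> int" where
  "sgn_bit b = (if b = 0 then 1 else -1)"

definition corr_state :: "nat \<Rightarrow> ((nat \<Rightarrow> nat) \<Rightarrow> int) set \<Rightarrow> (nat \<Rightarrow> bit) set \<Rightarrow> (nat \<Rightarrow> bit) \<Rightarrow> bool" where
  "corr_state n S V v \<longleftrightarrow>
     (\<forall>f\<in>V. \<exists>p. labels_match n f p \<and> toy_op n (sgn_bit (evalv n f v)) p \<in> S) \<and>
     (\<forall>g\<in>S. \<exists>f\<in>V. \<exists>p. labels_match n f p \<and> g = toy_op n (sgn_bit (evalv n f v)) p)"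

end

theory Submission
  imports Defs "HOL-Library.FuncSet"
begin

(* Both formalisms are read off the same data: the pairs (f_{2j-1}, f_{2j}) of an observable are the
   labels p_j of a toy operator, and since the toy operators are diagonal, their product is
   phase-free (X Z = Y), so multiplying toy operators adds observables.  Under m, two single-site
   Paulis anticommute exactly when their symplectic form is 1, so m(g), m(h) commute iff the
   symplectic form of the observables vanishes.  Hence (V, v) yields the stabilizer state of all
   (-1)^(f.v) p(f) with f in V; it avoids -1 because only f = 0 has trivial labels.  Conversely a
   toy stabilizer state S gives the isotropic space V of observables of its elements; as -1 is not
   in S each of them occurs with a unique sign (-1)^(chi f), chi is additive on V, and every
   additive functional on a subspace of Z_2^{2n} is of the form f.v. *)

declare add_bit_eq_xor [simp del] mult_bit_eq_and [simp del]

lemma bit_add_self [simp]: "(a::bit) + a = 0"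
  by (cases a) simp_all

lemma sgn_bit_add: "sgn_bit (a + b) = sgn_bit a * sgn_bit b"
  by (cases a; cases b) (simp_all add: sgn_bit_def)

lemma sgn_bit_in_units: "sgn_bit a \<in> {1, -1}"
  by (simp add: sgn_bit_def)

lemma sgn_bit_eq_1_iff: "sgn_bit a = 1 \<longleftrightarrow> a = 0"
  by (simp add: sgn_bit_def)

lemma sgn_bit_inject: "sgn_bit a = sgn_bit b \<longleftrightarrow> a = b"
  by (cases a; cases b) (simp_all add: sgn_bit_def)

lemma sgn_bit_sum: "finite A \<Longrightarrow> sgn_bit (sum f A) = (\<Prod>i\<in>A. sgn_bit (f i))"
  by (induction A rule: finite_induct) (simp_all add: sgn_bit_add sgn_bit_eq_1_iff)

lemma additive_functional_eq_dot:
  fixes W :: "(nat \<Rightarrow> bit) set" and \<chi> :: "(nat \<Rightarrow> bit) \<Rightarrow> bit"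
  assumes "\<forall>f\<in>W. \<forall>i\<ge>m. f i = 0"
    and "\<forall>f\<in>W. \<forall>g\<in>W. vadd f g \<in> W \<and> \<chi> (vadd f g) = \<chi> f + \<chi> g"
  shows "\<exists>v. (\<forall>i\<ge>m. v i = 0) \<and> (\<forall>f\<in>W. (\<Sum>i<m. f i * v i) = \<chi> f)"
  using assms
proof (induction m arbitrary: W)
  case 0
  have "\<chi> f = 0" if "f \<in> W" for f
  proof -
    have "vadd f f = f"
      using "0.prems"(1) that by (simp add: vadd_def fun_eq_iff)
    then show ?thesis
      using "0.prems"(2) that by (metis bit_add_self)
  qed
  then show ?case
    by auto
next
  case (Suc m)
  define W' where "W' = {f\<in>W. f m = 0}"
  have "\<forall>f\<in>W'. \<forall>i\<ge>m. f i = 0"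
  proof (intro ballI allI impI)
    fix f i
    assume "f \<in> W'" "m \<le> i"
    with Suc.prems(1) show "f i = 0"
      by (cases "i = m") (auto simp: W'_def)
  qed
  moreover have "\<forall>f\<in>W'. \<forall>g\<in>W'. vadd f g \<in> W' \<and> \<chi> (vadd f g) = \<chi> f + \<chi> g"
    using Suc.prems(2) by (simp add: W'_def vadd_def)
  ultimately obtain v' where v'_supp: "\<forall>i\<ge>m. v' i = 0"
    and v'_dot: "\<forall>f\<in>W'. (\<Sum>i<m. f i * v' i) = \<chi> f"
    using Suc.IH by blast
  show ?case
  proof (cases "\<exists>h\<in>W. h m = 1")
    case True
    then obtain h where h: "h \<in> W" "h m = 1"
      by blast
    (* every f with f m = 1 is h plus an element of W', which fixes the value of v at m *)
    define v where "v = v'(m := \<chi> h - (\<Sum>i<m. h i * v' i))"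
    have v_below: "(\<Sum>i<m. f i * v i) = (\<Sum>i<m. f i * v' i)" for f
      unfolding v_def by (intro sum.cong) auto
    have "(\<Sum>i<Suc m. f i * v i) = \<chi> f" if f: "f \<in> W" for f
    proof (cases "f m = 0")
      case True
      with f v'_dot show ?thesis
        by (simp add: W'_def v_below)
    next
      case False
      then have "f m = 1"
        by simp
      with f h Suc.prems(2) have fh: "vadd f h \<in> W'" "\<chi> (vadd f h) = \<chi> f + \<chi> h"
        by (simp_all add: W'_def vadd_def)
      have "\<chi> f + \<chi> h = \<chi> (vadd f h)"
        using fh(2) by simp
      also have "\<dots> = (\<Sum>i<m. (f i + h i) * v' i)"
        using v'_dot fh(1) by (simp add: vadd_def)
      also have "\<dots> = (\<Sum>i<m. f i * v' i) + (\<Sum>i<m. h i * v' i)"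
        by (simp add: distrib_right sum.distrib)
      finally have "\<chi> f = (\<Sum>i<m. f i * v' i) + (\<chi> h - (\<Sum>i<m. h i * v' i))"
        by (metis add.assoc add.commute bit_add_self add_0 minus_bit_def)
      with \<open>f m = 1\<close> show ?thesis
        by (simp add: v_below v_def)
    qed
    moreover have "\<forall>i\<ge>Suc m. v i = 0"
      using v'_supp by (simp add: v_def)
    ultimately show ?thesis
      by blast
  next
    case False
    then have "W' = W"
      by (auto simp: W'_def)
    have "(\<Sum>i<Suc m. f i * v' i) = \<chi> f" if "f \<in> W" for f
      using that v'_dot \<open>W' = W\<close> v'_supp by simp
    with v'_supp show ?thesis
      by (intro exI[of _ v']) auto
  qed
qed

fun pl_mult :: "pl \<Rightarrow> pl \<Rightarrow> pl" where
  "pl_mult PI b = b"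
| "pl_mult a PI = a"
| "pl_mult PX PX = PI" | "pl_mult PX PY = PZ" | "pl_mult PX PZ = PY"
| "pl_mult PY PX = PZ" | "pl_mult PY PY = PI" | "pl_mult PY PZ = PX"
| "pl_mult PZ PX = PY" | "pl_mult PZ PY = PX" | "pl_mult PZ PZ = PI"

lemma pl_mult_self [simp]: "pl_mult a a = PI"
  by (cases a) simp_all

lemma tsite_pl_mult: "k < 4 \<Longrightarrow> tsite (pl_mult a b) k = tsite a k * tsite b k"
  by (cases a; cases b) (auto simp: less_Suc_eq numeral_eq_Suc)

lemma tsite_0 [simp]: "tsite a 0 = 1"
  by (cases a) simp_all

lemma tsite_inject:
  assumes "\<And>k. k < 4 \<Longrightarrow> tsite a k = tsite b k"
  shows "a = b"
proof -
  have "tsite a 1 = tsite b 1" "tsite a 2 = tsite b 2" "tsite a 3 = tsite b 3"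
    using assms by simp_all
  then show ?thesis
    by (cases a; cases b) simp_all
qed

lemma lab_add: "lab (a + c) (b + d) = pl_mult (lab a b) (lab c d)"
  by (cases a; cases b; cases c; cases d) simp_all

fun pl_x :: "pl \<Rightarrow> bit" where
  "pl_x PI = 0" | "pl_x PX = 1" | "pl_x PY = 1" | "pl_x PZ = 0"

fun pl_z :: "pl \<Rightarrow> bit" where
  "pl_z PI = 0" | "pl_z PX = 0" | "pl_z PY = 1" | "pl_z PZ = 1"

lemma lab_pl_x_pl_z [simp]: "lab (pl_x a) (pl_z a) = a"
  by (cases a) simp_all

definition pl_symp :: "pl \<Rightarrow> pl \<Rightarrow> bit" where
  "pl_symp a b = pl_x a * pl_z b - pl_z a * pl_x b"

lemma pl_symp_lab: "pl_symp (lab a b) (lab c d) = a * d - b * c"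
  by (cases a; cases b; cases c; cases d) (simp_all add: pl_symp_def)

lemma tmul_toy_op:
  "tmul (toy_op n \<alpha> p) (toy_op n \<beta> q) = toy_op n (\<alpha> * \<beta>) (\<lambda>i. pl_mult (p i) (q i))"
proof
  fix k
  show "tmul (toy_op n \<alpha> p) (toy_op n \<beta> q) k = toy_op n (\<alpha> * \<beta>) (\<lambda>i. pl_mult (p i) (q i)) k"
  proof (cases "k \<in> tidx n")
    case True
    then have "(\<Prod>i<n. tsite (pl_mult (p i) (q i)) (k i)) = (\<Prod>i<n. tsite (p i) (k i) * tsite (q i) (k i))"
      by (intro prod.cong) (simp_all add: tidx_def tsite_pl_mult)
    with True show ?thesis
      by (simp add: tmul_def toy_op_def prod.distrib)
  qed (simp add: tmul_def toy_op_def)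
qed

lemma toy_op_cong: "(\<And>i. i < n \<Longrightarrow> p i = q i) \<Longrightarrow> toy_op n \<alpha> p = toy_op n \<alpha> q"
  unfolding toy_op_def by (intro ext) (auto intro!: prod.cong)

lemma toy_op_at_zero: "toy_op n \<alpha> p (\<lambda>_. 0) = \<alpha>"
  by (simp add: toy_op_def tidx_def)

lemma toy_op_at_single:
  assumes "i < n" "c < 4"
  shows "toy_op n \<alpha> p (\<lambda>j. if j = i then c else 0) = \<alpha> * tsite (p i) c"
proof -
  have "(\<Prod>j<n. tsite (p j) (if j = i then c else 0)) = (\<Prod>j<n. if j = i then tsite (p i) c else 1)"
    by (intro prod.cong) auto
  with assms show ?thesis
    by (simp add: toy_op_def tidx_def)
qed

lemma toy_op_inject:
  assumes "\<alpha> \<noteq> 0"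
  shows "toy_op n \<alpha> p = toy_op n \<beta> q \<longleftrightarrow> \<alpha> = \<beta> \<and> (\<forall>i<n. p i = q i)"
proof
  assume eq: "toy_op n \<alpha> p = toy_op n \<beta> q"
  then have "\<alpha> = \<beta>"
    by (metis toy_op_at_zero)
  moreover have "p i = q i" if "i < n" for i
  proof (rule tsite_inject)
    fix c :: nat
    assume "c < 4"
    with eq \<open>i < n\<close> have "\<alpha> * tsite (p i) c = \<beta> * tsite (q i) c"
      by (metis toy_op_at_single)
    with \<open>\<alpha> = \<beta>\<close> assms show "tsite (p i) c = tsite (q i) c"
      by simp
  qed
  ultimately show "\<alpha> = \<beta> \<and> (\<forall>i<n. p i = q i)"
    by blast
qed (auto intro: toy_op_cong)

lemma toy_group_coeff:
  assumes "toy_op n \<alpha> p \<in> toy_group n"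
  shows "\<alpha> \<in> {1, -1}"
proof -
  obtain \<beta> q where "\<beta> \<in> {1, -1}" "toy_op n \<alpha> p = toy_op n \<beta> q"
    using assms by (auto simp: toy_group_def)
  then show ?thesis
    by (metis toy_op_at_zero)
qed

lemma qubit_op_cong: "(\<And>i. i < n \<Longrightarrow> p i = q i) \<Longrightarrow> qubit_op n \<alpha> p = qubit_op n \<alpha> q"
  unfolding qubit_op_def by (intro ext) (auto intro!: prod.cong)

lemma toy_m_toy_op:
  assumes "\<alpha> \<in> {1, -1}"
  shows "toy_m n (toy_op n \<alpha> p) = qubit_op n \<alpha> p"
  unfolding toy_m_def
proof (rule someI2[where Q = "\<lambda>Q. Q = qubit_op n \<alpha> p"])
  show "\<exists>\<alpha>' p'. \<alpha>' \<in> {1, -1} \<and> toy_op n \<alpha> p = toy_op n \<alpha>' p' \<and> qubit_op n \<alpha> p = qubit_op n \<alpha>' p'"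
    using assms by blast
next
  fix Q
  assume "\<exists>\<alpha>' p'. \<alpha>' \<in> {1, -1} \<and> toy_op n \<alpha> p = toy_op n \<alpha>' p' \<and> Q = qubit_op n \<alpha>' p'"
  then obtain \<alpha>' p' where eq: "toy_op n \<alpha> p = toy_op n \<alpha>' p'" and Q: "Q = qubit_op n \<alpha>' p'"
    by blast
  from eq assms have "\<alpha>' = \<alpha>" "\<And>i. i < n \<Longrightarrow> p' i = p i"
    by (auto simp: toy_op_inject)
  with Q show "Q = qubit_op n \<alpha> p"
    using qubit_op_cong[of n p' p \<alpha>] by simp
qed

lemma sum_bits_prod:
  fixes F :: "nat \<Rightarrow> bool \<Rightarrow> 'a::comm_semiring_1"
  shows "(\<Sum>z\<in>bits n. \<Prod>i<n. F i (z i)) = (\<Prod>i<n. F i False + F i True)"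
proof -
  define pad where "pad g i = (i < n \<and> g i)" for g :: "nat \<Rightarrow> bool" and i
  have "bij_betw pad (PiE {..<n} (\<lambda>_. UNIV)) (bits n)"
  proof (rule bij_betw_byWitness[where f' = "\<lambda>z. restrict z {..<n}"])
    show "\<forall>g\<in>PiE {..<n} (\<lambda>_. UNIV). restrict (pad g) {..<n} = g"
    proof
      fix g :: "nat \<Rightarrow> bool"
      assume g: "g \<in> PiE {..<n} (\<lambda>_. UNIV)"
      show "restrict (pad g) {..<n} = g"
        by (rule ext) (simp add: pad_def PiE_arb[OF g])
    qed
    show "\<forall>z\<in>bits n. pad (restrict z {..<n}) = z"
      by (simp add: pad_def fun_eq_iff bits_def)
    show "pad ` PiE {..<n} (\<lambda>_. UNIV) \<subseteq> bits n"
      by (simp add: image_subset_iff pad_def bits_def)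
    show "(\<lambda>z. restrict z {..<n}) ` bits n \<subseteq> PiE {..<n} (\<lambda>_. UNIV)"
      by (simp add: image_subset_iff)
  qed
  then have "(\<Sum>z\<in>bits n. \<Prod>i<n. F i (z i)) = (\<Sum>g\<in>PiE {..<n} (\<lambda>_. UNIV). \<Prod>i<n. F i (pad g i))"
    by (rule sum.reindex_bij_betw[symmetric])
  also have "\<dots> = (\<Sum>g\<in>PiE {..<n} (\<lambda>_. UNIV). \<Prod>i<n. F i (g i))"
    by (intro sum.cong prod.cong) (simp_all add: pad_def)
  also have "\<dots> = (\<Prod>i<n. \<Sum>b\<in>UNIV. F i b)"
    by (rule prod_sum_PiE[symmetric]) simp_all
  finally show ?thesis
    by (simp add: UNIV_bool)
qed

definition qsite_mult :: "pl \<Rightarrow> pl \<Rightarrow> bool \<Rightarrow> bool \<Rightarrow> complex" where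
  "qsite_mult a b u w = qsite a u False * qsite b False w + qsite a u True * qsite b True w"

lemma qmul_qubit_op:
  "qmul n (qubit_op n \<alpha> p) (qubit_op n \<beta> q) x y
     = of_int \<alpha> * of_int \<beta> * (\<Prod>i<n. qsite_mult (p i) (q i) (x i) (y i))"
proof -
  have "qmul n (qubit_op n \<alpha> p) (qubit_op n \<beta> q) x y
      = of_int \<alpha> * of_int \<beta> * (\<Sum>z\<in>bits n. \<Prod>i<n. qsite (p i) (x i) (z i) * qsite (q i) (z i) (y i))"
    unfolding qmul_def qubit_op_def sum_distrib_left by (intro sum.cong) (simp_all add: prod.distrib)
  also have "\<dots> = of_int \<alpha> * of_int \<beta> * (\<Prod>i<n. qsite_mult (p i) (q i) (x i) (y i))"
    using sum_bits_prod[of "\<lambda>i t. qsite (p i) (x i) t * qsite (q i) t (y i)" n]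
    by (simp add: qsite_mult_def)
  finally show ?thesis .
qed

lemma qsite_mult_swap: "qsite_mult a b u w = of_int (sgn_bit (pl_symp a b)) * qsite_mult b a u w"
  by (cases a; cases b; cases u; cases w) (simp_all add: qsite_mult_def pl_symp_def sgn_bit_def)

lemma qsite_mult_row_nonzero: "\<exists>w. qsite_mult a b u w \<noteq> 0"
  by (cases a; cases b; cases u) (auto simp: qsite_mult_def)

lemma qmul_qubit_op_row_nonzero:
  assumes "\<alpha> \<noteq> 0" "\<beta> \<noteq> 0"
  shows "\<exists>y\<in>bits n. qmul n (qubit_op n \<alpha> p) (qubit_op n \<beta> q) x y \<noteq> 0"
proof
  define y where "y i = (i < n \<and> (SOME w. qsite_mult (p i) (q i) (x i) w \<noteq> 0))" for i
  show "y \<in> bits n"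
    by (simp add: y_def bits_def)
  have "qsite_mult (p i) (q i) (x i) (y i) \<noteq> 0" if "i < n" for i
    using that someI_ex[OF qsite_mult_row_nonzero] by (simp add: y_def)
  with assms show "qmul n (qubit_op n \<alpha> p) (qubit_op n \<beta> q) x y \<noteq> 0"
    by (simp add: qmul_qubit_op)
qed

lemma qcommute_qubit_op_iff:
  assumes "\<alpha> \<noteq> 0" "\<beta> \<noteq> 0"
  shows "qcommute n (qubit_op n \<alpha> p) (qubit_op n \<beta> q) \<longleftrightarrow> (\<Sum>i<n. pl_symp (p i) (q i)) = 0"
proof -
  let ?A = "qubit_op n \<alpha> p" and ?B = "qubit_op n \<beta> q"
  let ?s = "of_int (sgn_bit (\<Sum>i<n. pl_symp (p i) (q i))) :: complex"
  have swap: "qmul n ?A ?B x y = ?s * qmul n ?B ?A x y" for x y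
    by (simp add: qmul_qubit_op qsite_mult_swap[of "p _"] prod.distrib sgn_bit_sum of_int_prod)
  show ?thesis
  proof
    assume "qcommute n ?A ?B"
    obtain y where "y \<in> bits n" "qmul n ?B ?A (\<lambda>_. False) y \<noteq> 0"
      using qmul_qubit_op_row_nonzero assms by blast
    moreover have "(\<lambda>_. False) \<in> bits n"
      by (simp add: bits_def)
    ultimately have "?s = 1"
      using \<open>qcommute n ?A ?B\<close> swap by (force simp: qcommute_def)
    then show "(\<Sum>i<n. pl_symp (p i) (q i)) = 0"
      by (metis of_int_eq_1_iff sgn_bit_eq_1_iff)
  next
    assume "(\<Sum>i<n. pl_symp (p i) (q i)) = 0"
    then show "qcommute n ?A ?B"
      by (simp add: qcommute_def swap sgn_bit_def)
  qed
qed

lemma toy_commute_toy_op_iff: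
  assumes "\<alpha> \<in> {1, -1}" "\<beta> \<in> {1, -1}"
  shows "toy_commute n (toy_op n \<alpha> p) (toy_op n \<beta> q) \<longleftrightarrow> (\<Sum>i<n. pl_symp (p i) (q i)) = 0"
  using assms by (auto simp: toy_commute_def toy_m_toy_op qcommute_qubit_op_iff)

definition obs_labels :: "(nat \<Rightarrow> bit) \<Rightarrow> nat \<Rightarrow> pl" where
  "obs_labels f j = lab (f (2*j)) (f (2*j+1))"

lemma labels_match_iff: "labels_match n f p \<longleftrightarrow> (\<forall>j<n. p j = obs_labels f j)"
  by (simp add: labels_match_def obs_labels_def del: lab.simps)

lemma obs_labels_vadd: "obs_labels (vadd f g) = (\<lambda>j. pl_mult (obs_labels f j) (obs_labels g j))"
  by (simp add: obs_labels_def vadd_def lab_add fun_eq_iff del: lab.simps)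

lemma obs_labels_zero [simp]: "obs_labels (\<lambda>_. 0) = (\<lambda>_. PI)"
  by (simp add: obs_labels_def fun_eq_iff)

lemma symp_eq_sum_pl_symp: "symp n f g = (\<Sum>j<n. pl_symp (obs_labels f j) (obs_labels g j))"
  by (simp add: symp_def obs_labels_def pl_symp_lab del: lab.simps)

lemma evalv_vadd: "evalv n (vadd f g) v = evalv n f v + evalv n g v"
  by (simp add: evalv_def vadd_def distrib_right sum.distrib)

lemma evalv_eq_0_if_labels_PI:
  assumes "\<forall>j<n. obs_labels f j = PI"
  shows "evalv n f v = 0"
proof -
  have "f i = 0" if "i < 2*n" for i
  proof -
    have "lab (f (2 * (i div 2))) (f (2 * (i div 2) + 1)) = PI"
      using assms that by (simp add: obs_labels_def del: lab.simps)
    moreover have "i = 2 * (i div 2) \<or> i = 2 * (i div 2) + 1"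
      by presburger
    ultimately show ?thesis
      by (cases "f (2 * (i div 2))"; cases "f (2 * (i div 2) + 1)") auto
  qed
  then show ?thesis
    by (simp add: evalv_def)
qed

definition labels_vec :: "nat \<Rightarrow> (nat \<Rightarrow> pl) \<Rightarrow> nat \<Rightarrow> bit" where
  "labels_vec n p i =
     (if i < 2*n then if even i then pl_x (p (i div 2)) else pl_z (p (i div 2)) else 0)"

lemma labels_vec_in_phase_space: "labels_vec n p \<in> phase_space n"
  by (simp add: labels_vec_def phase_space_def)

lemma obs_labels_labels_vec: "j < n \<Longrightarrow> obs_labels (labels_vec n p) j = p j"
  by (simp add: obs_labels_def labels_vec_def del: lab.simps)

definition toy_of_obs :: "nat \<Rightarrow> (nat \<Rightarrow> bit) \<Rightarrow> (nat \<Rightarrow> bit) \<Rightarrow> (nat \<Rightarrow> nat) \<Rightarrow> int" where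
  "toy_of_obs n v f = toy_op n (sgn_bit (evalv n f v)) (obs_labels f)"

lemma toy_of_obs_in_toy_group: "toy_of_obs n v f \<in> toy_group n"
  unfolding toy_of_obs_def toy_group_def using sgn_bit_in_units by blast

lemma tmul_toy_of_obs: "tmul (toy_of_obs n v f) (toy_of_obs n v g) = toy_of_obs n v (vadd f g)"
  by (simp add: toy_of_obs_def tmul_toy_op evalv_vadd sgn_bit_add obs_labels_vadd)

lemma toy_of_obs_zero: "toy_of_obs n v (\<lambda>_. 0) = toy_one n"
  by (simp add: toy_of_obs_def toy_one_def evalv_def sgn_bit_def)

lemma toy_commute_toy_of_obs_iff:
  "toy_commute n (toy_of_obs n v f) (toy_of_obs n v g) \<longleftrightarrow> symp n f g = 0"
  unfolding toy_of_obs_def symp_eq_sum_pl_symp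
  by (rule toy_commute_toy_op_iff[OF sgn_bit_in_units sgn_bit_in_units])

lemma toy_minus_one_notin_toy_of_obs_image: "toy_minus_one n \<notin> toy_of_obs n v ` A"
proof
  assume "toy_minus_one n \<in> toy_of_obs n v ` A"
  then obtain f where "toy_of_obs n v f = toy_minus_one n"
    by auto
  then have "sgn_bit (evalv n f v) = -1" "\<forall>j<n. obs_labels f j = PI"
    by (auto simp: toy_of_obs_def toy_minus_one_def toy_op_inject sgn_bit_def)
  then show False
    using evalv_eq_0_if_labels_PI by (simp add: sgn_bit_def)
qed

lemma toy_stab_toy_of_obs_image:
  assumes "gen_state n V v"
  shows "toy_stab n (toy_of_obs n v ` V)"
proof -
  from assms have zero: "(\<lambda>_. 0) \<in> V" and add: "\<forall>f\<in>V. \<forall>g\<in>V. vadd f g \<in> V"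
    and symp_0: "\<forall>f\<in>V. \<forall>g\<in>V. symp n f g = 0"
    by (auto simp: gen_state_def isotropic_def subspace2_def)
  have "tmul (toy_of_obs n v f) (toy_of_obs n v f) = toy_one n" for f
  proof -
    have "vadd f f = (\<lambda>_. 0)"
      by (simp add: vadd_def)
    then show ?thesis
      by (simp add: tmul_toy_of_obs toy_of_obs_zero)
  qed
  moreover have "toy_one n \<in> toy_of_obs n v ` V"
    using zero by (metis image_eqI toy_of_obs_zero)
  ultimately have "toy_subgroup n (toy_of_obs n v ` V)"
    using add by (auto simp: toy_subgroup_def toy_of_obs_in_toy_group tmul_toy_of_obs)
  with symp_0 show ?thesis
    by (simp add: toy_stab_def toy_commute_toy_of_obs_iff toy_minus_one_notin_toy_of_obs_image)
qed

lemma corr_state_toy_of_obs_image: "corr_state n (toy_of_obs n v ` V) V v"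
  by (auto simp: corr_state_def labels_match_iff toy_of_obs_def)

lemma corr_obs_vadd_tmul:
  assumes "corr_obs n f g'" "corr_obs n g g''"
  shows "corr_obs n (vadd f g) (tmul g' g'')"
proof -
  obtain \<alpha> p \<beta> q where "\<alpha> \<in> {1, -1}" "g' = toy_op n \<alpha> p" "\<forall>j<n. p j = obs_labels f j"
    "\<beta> \<in> {1, -1}" "g'' = toy_op n \<beta> q" "\<forall>j<n. q j = obs_labels g j"
    using assms by (auto simp: corr_obs_def labels_match_iff)
  then show ?thesis
    unfolding corr_obs_def labels_match_iff
    by (intro exI[of _ "\<alpha> * \<beta>"] exI[of _ "\<lambda>j. pl_mult (p j) (q j)"])
      (auto simp: tmul_toy_op obs_labels_vadd)
qed

definition stab_obs :: "nat \<Rightarrow> ((nat \<Rightarrow> nat) \<Rightarrow> int) set \<Rightarrow> (nat \<Rightarrow> bit) set" where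
  "stab_obs n S = {f \<in> phase_space n. \<exists>\<alpha>. toy_op n \<alpha> (obs_labels f) \<in> S}"

definition stab_sign :: "nat \<Rightarrow> ((nat \<Rightarrow> nat) \<Rightarrow> int) set \<Rightarrow> (nat \<Rightarrow> bit) \<Rightarrow> bit" where
  "stab_sign n S f = (if toy_op n 1 (obs_labels f) \<in> S then 0 else 1)"

lemma toy_stab_tmul: "toy_stab n S \<Longrightarrow> g \<in> S \<Longrightarrow> h \<in> S \<Longrightarrow> tmul g h \<in> S"
  by (simp add: toy_stab_def toy_subgroup_def)

lemma toy_stab_coeff:
  assumes "toy_stab n S" "toy_op n \<alpha> p \<in> S"
  shows "\<alpha> \<in> {1, -1}"
proof (rule toy_group_coeff)
  show "toy_op n \<alpha> p \<in> toy_group n"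
    using assms by (auto simp: toy_stab_def toy_subgroup_def)
qed

lemma toy_stab_coeff_unique:
  assumes "toy_stab n S" "toy_op n \<alpha> p \<in> S" "toy_op n \<beta> p \<in> S"
  shows "\<alpha> = \<beta>"
proof (rule ccontr)
  assume "\<alpha> \<noteq> \<beta>"
  moreover have "\<alpha> \<in> {1, -1}" "\<beta> \<in> {1, -1}"
    using assms toy_stab_coeff by blast+
  ultimately have "tmul (toy_op n \<alpha> p) (toy_op n \<beta> p) = toy_minus_one n"
    by (auto simp: tmul_toy_op toy_minus_one_def)
  moreover have "tmul (toy_op n \<alpha> p) (toy_op n \<beta> p) \<in> S"
    using toy_stab_tmul[OF assms] .
  ultimately show False
    using assms(1) by (simp add: toy_stab_def)
qed

lemma toy_stab_coeff_eq_stab_sign: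
  assumes "toy_stab n S" "toy_op n \<alpha> (obs_labels f) \<in> S"
  shows "\<alpha> = sgn_bit (stab_sign n S f)"
proof (cases "\<alpha> = 1")
  case True
  with assms(2) show ?thesis
    by (simp add: stab_sign_def sgn_bit_def)
next
  case False
  then have "\<alpha> = -1"
    using toy_stab_coeff[OF assms] by simp
  moreover have "toy_op n 1 (obs_labels f) \<notin> S"
    using toy_stab_coeff_unique[OF assms] False by blast
  ultimately show ?thesis
    by (simp add: stab_sign_def sgn_bit_def)
qed

lemma stab_obs_vadd:
  assumes "toy_stab n S" "f \<in> stab_obs n S" "g \<in> stab_obs n S"
  shows "vadd f g \<in> stab_obs n S \<and> stab_sign n S (vadd f g) = stab_sign n S f + stab_sign n S g"
proof -
  obtain \<alpha> \<beta> where \<alpha>: "toy_op n \<alpha> (obs_labels f) \<in> S" and \<beta>: "toy_op n \<beta> (obs_labels g) \<in> S"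
    using assms(2,3) by (auto simp: stab_obs_def)
  have "tmul (toy_op n \<alpha> (obs_labels f)) (toy_op n \<beta> (obs_labels g)) \<in> S"
    using toy_stab_tmul[OF assms(1) \<alpha> \<beta>] .
  then have prod: "toy_op n (\<alpha> * \<beta>) (obs_labels (vadd f g)) \<in> S"
    by (simp add: tmul_toy_op obs_labels_vadd)
  have "vadd f g \<in> phase_space n"
    using assms(2,3) by (simp add: stab_obs_def phase_space_def vadd_def)
  with prod have "vadd f g \<in> stab_obs n S"
    by (auto simp: stab_obs_def)
  moreover have "sgn_bit (stab_sign n S (vadd f g)) = \<alpha> * \<beta>"
    using toy_stab_coeff_eq_stab_sign[OF assms(1) prod] by simp
  then have "sgn_bit (stab_sign n S (vadd f g)) = sgn_bit (stab_sign n S f + stab_sign n S g)"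
    using toy_stab_coeff_eq_stab_sign[OF assms(1) \<alpha>] toy_stab_coeff_eq_stab_sign[OF assms(1) \<beta>]
    by (simp add: sgn_bit_add)
  ultimately show ?thesis
    by (simp add: sgn_bit_inject)
qed

lemma isotropic_stab_obs:
  assumes "toy_stab n S"
  shows "isotropic n (stab_obs n S)"
  unfolding isotropic_def subspace2_def
proof (intro conjI ballI allI)
  show "stab_obs n S \<subseteq> phase_space n"
    by (auto simp: stab_obs_def)
  have "toy_op n 1 (obs_labels (\<lambda>_. 0)) \<in> S"
    using assms by (simp add: toy_stab_def toy_subgroup_def toy_one_def)
  then show zero: "(\<lambda>_. 0) \<in> stab_obs n S"
    by (auto simp: stab_obs_def phase_space_def)
  show "vadd f g \<in> stab_obs n S" if "f \<in> stab_obs n S" "g \<in> stab_obs n S" for f g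
    using stab_obs_vadd[OF assms that] by blast
  show "(\<lambda>i. c * f i) \<in> stab_obs n S" if "f \<in> stab_obs n S" for c :: bit and f
    using that zero by (cases c) simp_all
  show "symp n f g = 0" if "f \<in> stab_obs n S" "g \<in> stab_obs n S" for f g
  proof -
    from that(1) obtain \<alpha> where "toy_op n \<alpha> (obs_labels f) \<in> S"
      by (auto simp: stab_obs_def)
    moreover from that(2) obtain \<beta> where "toy_op n \<beta> (obs_labels g) \<in> S"
      by (auto simp: stab_obs_def)
    ultimately have "toy_commute n (toy_op n \<alpha> (obs_labels f)) (toy_op n \<beta> (obs_labels g))"
      and "\<alpha> \<in> {1, -1}" "\<beta> \<in> {1, -1}"
      using assms toy_stab_coeff by (auto simp: toy_stab_def)
    then show ?thesis
      by (simp only: toy_commute_toy_op_iff symp_eq_sum_pl_symp)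
  qed
qed

lemma corr_state_stab_obs:
  assumes "toy_stab n S" and dot: "\<forall>f\<in>stab_obs n S. evalv n f v = stab_sign n S f"
  shows "corr_state n S (stab_obs n S) v"
  unfolding corr_state_def
proof (intro conjI ballI)
  fix f
  assume f: "f \<in> stab_obs n S"
  then obtain \<alpha> where \<alpha>: "toy_op n \<alpha> (obs_labels f) \<in> S"
    by (auto simp: stab_obs_def)
  moreover have "\<alpha> = sgn_bit (evalv n f v)"
    using toy_stab_coeff_eq_stab_sign[OF assms(1) \<alpha>] dot f by simp
  ultimately show "\<exists>p. labels_match n f p \<and> toy_op n (sgn_bit (evalv n f v)) p \<in> S"
    by (auto simp: labels_match_iff)
next
  fix g
  assume "g \<in> S"
  then obtain \<alpha> p where g: "g = toy_op n \<alpha> p"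
    using assms(1) by (auto simp: toy_stab_def toy_subgroup_def toy_group_def)
  define f where "f = labels_vec n p"
  have labels: "labels_match n f p"
    by (simp add: labels_match_iff f_def obs_labels_labels_vec)
  then have "toy_op n \<alpha> (obs_labels f) = g"
    unfolding g labels_match_iff by (intro toy_op_cong) simp
  with \<open>g \<in> S\<close> have \<alpha>: "toy_op n \<alpha> (obs_labels f) \<in> S"
    by simp
  moreover have "f \<in> phase_space n"
    by (simp add: f_def labels_vec_in_phase_space)
  ultimately have f: "f \<in> stab_obs n S"
    by (auto simp: stab_obs_def)
  moreover have "\<alpha> = sgn_bit (evalv n f v)"
    using toy_stab_coeff_eq_stab_sign[OF assms(1) \<alpha>] dot f by simp
  ultimately show "\<exists>f\<in>stab_obs n S. \<exists>p. labels_match n f p \<and> g = toy_op n (sgn_bit (evalv n f v)) p"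
    using labels g by blast
qed

lemma toy_stab_imp_corr_gen_state:
  assumes "toy_stab n S"
  shows "\<exists>V v. gen_state n V v \<and> corr_state n S V v"
proof -
  have "\<forall>f\<in>stab_obs n S. \<forall>i\<ge>2*n. f i = 0"
    by (simp add: stab_obs_def phase_space_def)
  then obtain v where "v \<in> phase_space n" and dot: "\<forall>f\<in>stab_obs n S. evalv n f v = stab_sign n S f"
    using additive_functional_eq_dot[of "stab_obs n S" "2*n" "stab_sign n S"] stab_obs_vadd[OF assms]
    unfolding phase_space_def evalv_def by blast
  then have "gen_state n (stab_obs n S) v"
    using isotropic_stab_obs[OF assms] by (simp add: gen_state_def)
  moreover have "corr_state n S (stab_obs n S) v"
    using corr_state_stab_obs[OF assms dot] .
  ultimately show ?thesis
    by blast
qed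

theorem mainTheorem3:
  fixes n :: nat
  assumes "n \<ge> 1"
  shows "(\<forall>V v. gen_state n V v \<longrightarrow> (\<exists>S. toy_stab n S \<and> corr_state n S V v))
       \<and> (\<forall>S. toy_stab n S \<longrightarrow> (\<exists>V v. gen_state n V v \<and> corr_state n S V v))
       \<and> (\<forall>f g g' g''. f \<in> phase_space n \<longrightarrow> g \<in> phase_space n \<longrightarrow>
            corr_obs n f g' \<longrightarrow> corr_obs n g g'' \<longrightarrow> corr_obs n (vadd f g) (tmul g' g''))"
proof (intro conjI allI impI)
  fix V v
  assume "gen_state n V v"
  then show "\<exists>S. toy_stab n S \<and> corr_state n S V v"
    using toy_stab_toy_of_obs_image corr_state_toy_of_obs_image by blast
next
  fix S
  assume "toy_stab n S"
  then show "\<exists>V v. gen_state n V v \<and> corr_state n S V v"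
    by (rule toy_stab_imp_corr_gen_state)
next
  fix f g g' g''
  assume "corr_obs n f g'" "corr_obs n g g''"
  then show "corr_obs n (vadd f g) (tmul g' g'')"
    by (rule corr_obs_vadd_tmul)
qed

end
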